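(* Let $(Z_0,\dots,Z_H)$ be a process on an abstract state space $\mathcal{Z}$ and fix steps $t<u\le H$. Consider two hypotheses $H_0,H_1$ under which $Z_t$ has distributions $P^{(0)}_{Z_t}\ll P^{(1)}_{Z_t}$ with $\chi^2(P^{(0)}_{Z_t}\|P^{(1)}_{Z_t})=\Delta^2\in(0,\infty)$, and under which, for $j\in\{t,\dots,u-1\}$, $Z_{j+1}$ given $Z_t,\dots,Z_j$ is distributed as $K_j(\cdot\mid Z_j)$ for Markov kernels $K_j$ common to both hypotheses with $\eta_{\chi^2}(K_j)\le\eta_j\in(0,1]$. Let $Y_u=g_u(Z_u)$ for a fixed function $g_u$. Let $\epsilon\in(0,1/2)$. Any test based on $n$ i.i.d. samples of $Y_u$ that distinguishes $H_0$ from $H_1$ with total testing error at most $\epsilon$ requires $$n\ge\frac{(1-\epsilon)^2}{\mathrm{Attn}(t\to u)\,\Delta^2},\qquad \mathrm{Attn}(t\to u):=\prod_{j=t}^{u-1}\eta_j.$$ In particular, if $\eta_j\equiv\eta$, then $n\ge(1-\epsilon)^2/(\eta^{u-t}\Delta^2)$.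
   Context: For distributions $P\ll Q$, $\chi^2(P\|Q)=\int(dP/dQ-1)^2dQ$; for a Markov kernel $K$, $PK$ is the pushforward and $\eta_{\chi^2}(K)=\sup\{\chi^2(PK\|QK)/\chi^2(P\|Q):P\ll Q,\ 0<\chi^2(P\|Q)<\infty\}$. For a test $\psi$ on $n$ i.i.d. samples, the total testing error is $\mathbb{P}_{H_0}(\psi=1)+\mathbb{P}_{H_1}(\psi=0)$. *)

theory Defs
  imports "HOL-Probability.Probability"
begin

definition chi2 :: "'a measure \<Rightarrow> 'a measure \<Rightarrow> ennreal" where
  "chi2 P Q = (if absolutely_continuous Q P
      then (\<integral>\<^sup>+ x. ennreal ((enn2real (RN_deriv Q P x) - 1)\<^sup>2) \<partial>Q)
      else \<infinity>)"

definition eta_chi2 :: "'a measure \<Rightarrow> ('a \<Rightarrow> 'a measure) \<Rightarrow> ennreal" where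
  "eta_chi2 S K = Sup {chi2 (P \<bind> K) (Q \<bind> K) / chi2 P Q | P Q.
      P \<in> space (prob_algebra S) \<and> Q \<in> space (prob_algebra S) \<and>
      absolutely_continuous Q P \<and> 0 < chi2 P Q \<and> chi2 P Q < \<infinity>}"

definition total_test_error ::
    "nat \<Rightarrow> 'y measure \<Rightarrow> 'y measure \<Rightarrow> ((nat \<Rightarrow> 'y) \<Rightarrow> bool) \<Rightarrow> real" where
  "total_test_error n Q0 Q1 \<psi> =
     measure (PiM {..<n} (\<lambda>_. Q0)) {x \<in> space (PiM {..<n} (\<lambda>_. Q0)). \<psi> x}
   + measure (PiM {..<n} (\<lambda>_. Q1)) {x \<in> space (PiM {..<n} (\<lambda>_. Q1)). \<not> \<psi> x}"

text \<open>Markov transition property under the probability measure M: for t \<le> j, the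
  conditional law of Z (j+1) given Z t, ..., Z j is K (Z j).\<close>
definition markov_step ::
    "'o measure \<Rightarrow> 'z measure \<Rightarrow> (nat \<Rightarrow> 'o \<Rightarrow> 'z) \<Rightarrow> nat \<Rightarrow> nat \<Rightarrow> ('z \<Rightarrow> 'z measure) \<Rightarrow> bool" where
  "markov_step M S Z t j K \<longleftrightarrow>
     (\<forall>B \<in> sets (PiM {t..j} (\<lambda>_. S)). \<forall>A \<in> sets S.
        measure M {\<omega> \<in> space M. restrict (\<lambda>i. Z i \<omega>) {t..j} \<in> B \<and> Z (Suc j) \<omega> \<in> A}
        = (\<integral>\<omega>. indicator {\<omega> \<in> space M. restrict (\<lambda>i. Z i \<omega>) {t..j} \<in> B} \<omega>
                 * measure (K (Z j \<omega>)) A \<partial>M))"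

end

(* Each Markov step contracts the chi-square divergence by its contraction coefficient, so
   chi2(P_u || Q_u) <= Attn(t -> u) * Delta^2 =: c.  A test on samples of Y_u = g(Z_u) is a test on
   samples of Z_u, and chi-square tensorises: chi2(P^n || Q^n) = (1 + c)^n - 1.  Le Cam's bound
   Q(A) - P(A) <= sqrt (chi2(P || Q)) / 2 then turns total error <= eps into
   4 (1 - eps)^2 <= (1 + c)^n - 1, while (1 + c)^n <= 1 + 3 n c as long as n c <= 1;
   hence n c >= (1 - eps)^2. *)

theory Submission
  imports Defs
begin

lemma real_density_of_absolutely_continuous:
  assumes M: "sigma_finite_measure M" and N: "sigma_finite_measure N"
    and ac: "absolutely_continuous M N" and sets_eq: "sets N = sets M"
  obtains r where "r \<in> borel_measurable M" "\<And>x. 0 \<le> r x"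
    and "N = density M (\<lambda>x. ennreal (r x))"
proof
  interpret M: sigma_finite_measure M by fact
  have "AE x in M. RN_deriv M N x = ennreal (enn2real (RN_deriv M N x))"
    using M.RN_deriv_finite[OF N ac sets_eq] by eventually_elim (simp add: less_top)
  then have "density M (RN_deriv M N) = density M (\<lambda>x. ennreal (enn2real (RN_deriv M N x)))"
    by (intro density_cong) auto
  then show "N = density M (\<lambda>x. ennreal (enn2real (RN_deriv M N x)))"
    using M.density_RN_deriv[OF ac sets_eq] by simp
qed auto

lemma chi2_density:
  assumes Q: "sigma_finite_measure Q" and r[measurable]: "r \<in> borel_measurable Q"
    and r_nonneg: "\<And>x. 0 \<le> r x"
  shows "chi2 (density Q (\<lambda>x. ennreal (r x))) Q = (\<integral>\<^sup>+x. ennreal ((r x - 1)\<^sup>2) \<partial>Q)"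
proof -
  interpret Q: sigma_finite_measure Q by fact
  have "AE x in Q. ennreal (r x) = RN_deriv Q (density Q (\<lambda>x. ennreal (r x))) x"
    by (rule Q.RN_deriv_unique) auto
  then have "AE x in Q. ennreal ((enn2real (RN_deriv Q (density Q (\<lambda>x. ennreal (r x))) x) - 1)\<^sup>2)
      = ennreal ((r x - 1)\<^sup>2)"
    by eventually_elim (metis enn2real_ennreal r_nonneg)
  then show ?thesis
    by (simp add: chi2_def absolutely_continuousI_density nn_integral_cong_AE)
qed

lemma chi2_density_eq_ennrealD:
  assumes "sigma_finite_measure Q" "r \<in> borel_measurable Q" "\<And>x. 0 \<le> r x"
    and "chi2 (density Q (\<lambda>x. ennreal (r x))) Q = ennreal c" and "0 \<le> c"
  shows "integrable Q (\<lambda>x. (r x - 1)\<^sup>2)" "(\<integral>x. (r x - 1)\<^sup>2 \<partial>Q) = c"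
proof -
  have nn: "(\<integral>\<^sup>+x. ennreal ((r x - 1)\<^sup>2) \<partial>Q) = ennreal c"
    using assms chi2_density by metis
  show "integrable Q (\<lambda>x. (r x - 1)\<^sup>2)"
    using nn assms(2) by (intro integrableI_nn_integral_finite) auto
  show "(\<integral>x. (r x - 1)\<^sup>2 \<partial>Q) = c"
    using nn assms(2,5) by (subst integral_eq_nn_integral) auto
qed

lemma chi2_self:
  assumes "sigma_finite_measure P" shows "chi2 P P = 0"
  using chi2_density[OF assms, of "\<lambda>_. 1"] by (simp add: density_1)

lemma absolutely_continuous_if_chi2_finite:
  "chi2 P Q < \<infinity> \<Longrightarrow> absolutely_continuous Q P"
  by (auto simp: chi2_def split: if_splits)

lemma chi2_eq_0_imp_eq:
  assumes P: "sigma_finite_measure P" and Q: "sigma_finite_measure Q"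
    and sets_eq: "sets P = sets Q" and "chi2 P Q = 0"
  shows "P = Q"
proof -
  have ac: "absolutely_continuous Q P"
    using \<open>chi2 P Q = 0\<close> by (simp add: absolutely_continuous_if_chi2_finite)
  obtain r where r[measurable]: "r \<in> borel_measurable Q" and r_nonneg: "\<And>x. 0 \<le> r x"
    and P_eq: "P = density Q (\<lambda>x. ennreal (r x))"
    using real_density_of_absolutely_continuous[OF Q P ac sets_eq] by blast
  have "(\<integral>\<^sup>+x. ennreal ((r x - 1)\<^sup>2) \<partial>Q) = 0"
    using \<open>chi2 P Q = 0\<close> chi2_density[OF Q r r_nonneg] P_eq by simp
  then have "AE x in Q. r x = 1"
    by (subst (asm) nn_integral_0_iff_AE) auto
  then have "density Q (\<lambda>x. ennreal (r x)) = density Q (\<lambda>_. 1)"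
    by (intro density_cong) auto
  then show ?thesis
    using P_eq by (simp add: density_1)
qed

lemma chi2_bind_le:
  assumes P: "P \<in> space (prob_algebra S)" and Q: "Q \<in> space (prob_algebra S)"
    and K: "K \<in> S \<rightarrow>\<^sub>M prob_algebra S" and fin: "chi2 P Q < \<infinity>"
  shows "chi2 (P \<bind> K) (Q \<bind> K) \<le> eta_chi2 S K * chi2 P Q"
proof cases
  assume "chi2 P Q = 0"
  moreover have "prob_space P" "prob_space Q" "sets P = sets Q"
    using P Q by (auto simp: space_prob_algebra)
  ultimately have "P = Q"
    by (intro chi2_eq_0_imp_eq) (auto intro: prob_space_imp_sigma_finite)
  then show ?thesis
    using prob_space_bind'[OF Q K] by (simp add: chi2_self prob_space_imp_sigma_finite)
next
  assume nz: "chi2 P Q \<noteq> 0"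
  have "chi2 (P \<bind> K) (Q \<bind> K) / chi2 P Q \<le> eta_chi2 S K"
    unfolding eta_chi2_def
    using P Q fin nz absolutely_continuous_if_chi2_finite[OF fin]
    by (intro Sup_upper) (auto simp: zero_less_iff_neq_zero)
  then have "chi2 (P \<bind> K) (Q \<bind> K) / chi2 P Q * chi2 P Q \<le> eta_chi2 S K * chi2 P Q"
    by (rule mult_right_mono) simp
  moreover have "chi2 (P \<bind> K) (Q \<bind> K) / chi2 P Q * chi2 P Q = chi2 (P \<bind> K) (Q \<bind> K)"
    using nz fin ennreal_mult_divide_eq[of "chi2 P Q" "chi2 (P \<bind> K) (Q \<bind> K)"]
    by (simp add: divide_ennreal_def mult_ac)
  ultimately show ?thesis by simp
qed

lemma markov_step_measure_Suc:
  assumes Z: "\<And>i. t \<le> i \<Longrightarrow> i \<le> j \<Longrightarrow> Z i \<in> M \<rightarrow>\<^sub>M S"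
    and step: "markov_step M S Z t j K" and A: "A \<in> sets S"
  shows "measure M {\<omega> \<in> space M. Z (Suc j) \<omega> \<in> A} = (\<integral>\<omega>. measure (K (Z j \<omega>)) A \<partial>M)"
proof -
  have in_space: "restrict (\<lambda>i. Z i \<omega>) {t..j} \<in> space (PiM {t..j} (\<lambda>_. S))"
    if "\<omega> \<in> space M" for \<omega>
    using that measurable_space[OF Z] by (auto simp: space_PiM)
  have "measure M {\<omega> \<in> space M. restrict (\<lambda>i. Z i \<omega>) {t..j} \<in> space (PiM {t..j} (\<lambda>_. S))
      \<and> Z (Suc j) \<omega> \<in> A}
      = (\<integral>\<omega>. indicator {\<omega> \<in> space M. restrict (\<lambda>i. Z i \<omega>) {t..j} \<in> space (PiM {t..j} (\<lambda>_. S))} \<omega>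
          * measure (K (Z j \<omega>)) A \<partial>M)"
    using step A unfolding markov_step_def by blast
  also have "\<dots> = (\<integral>\<omega>. measure (K (Z j \<omega>)) A \<partial>M)"
    using in_space by (intro Bochner_Integration.integral_cong) auto
  finally show ?thesis
    using in_space by (simp cong: conj_cong)
qed

lemma distr_Suc_eq_bind_of_markov_step:
  assumes M: "prob_space M" and Z: "\<And>i. t \<le> i \<Longrightarrow> i \<le> Suc j \<Longrightarrow> Z i \<in> M \<rightarrow>\<^sub>M S"
    and "t \<le> j" and K: "K \<in> S \<rightarrow>\<^sub>M prob_algebra S" and step: "markov_step M S Z t j K"
  shows "distr M S (Z (Suc j)) = distr M S (Z j) \<bind> K"
proof (rule measure_eqI)
  interpret prob_space M by fact
  have Z_j[measurable]: "Z j \<in> M \<rightarrow>\<^sub>M S" and Z_Suc[measurable]: "Z (Suc j) \<in> M \<rightarrow>\<^sub>M S"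
    using Z \<open>t \<le> j\<close> by auto
  have P_j: "distr M S (Z j) \<in> space (prob_algebra S)"
    by (auto simp: space_prob_algebra intro!: prob_space_distr)
  interpret P_j: prob_space "distr M S (Z j)"
    by (rule prob_space_distr) simp
  interpret P_Suc: prob_space "distr M S (Z (Suc j))"
    by (rule prob_space_distr) simp
  interpret bind: prob_space "distr M S (Z j) \<bind> K"
    by (rule prob_space_bind'[OF P_j K])
  show "sets (distr M S (Z (Suc j))) = sets (distr M S (Z j) \<bind> K)"
    using sets_bind'[OF P_j K] by simp
  fix A assume "A \<in> sets (distr M S (Z (Suc j)))"
  then have A[measurable]: "A \<in> sets S" by simp
  have "measure (distr M S (Z (Suc j))) A = measure M {\<omega> \<in> space M. Z (Suc j) \<omega> \<in> A}"
    by (simp add: measure_distr vimage_def Int_def conj_commute)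
  also have "\<dots> = (\<integral>\<omega>. measure (K (Z j \<omega>)) A \<partial>M)"
    using Z step A by (intro markov_step_measure_Suc) auto
  also have "\<dots> = (\<integral>x. measure (K x) A \<partial>distr M S (Z j))"
    using measurable_compose[OF K measurable_measure_prob_algebra[OF A]]
    by (simp add: integral_distr)
  also have "\<dots> = measure (distr M S (Z j) \<bind> K) A"
    using measurable_prob_algebraD[OF K]
    by (intro P_j.measure_bind[symmetric, OF _ A]) (simp cong: measurable_cong_sets)
  finally show "emeasure (distr M S (Z (Suc j))) A = emeasure (distr M S (Z j) \<bind> K) A"
    by (simp add: P_Suc.emeasure_eq_measure bind.emeasure_eq_measure)
qed

lemma chi2_iterated_bind_le:
  fixes P Q :: "nat \<Rightarrow> 'a measure"
  assumes "t \<le> u"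
    and P_t: "P t \<in> space (prob_algebra S)" and Q_t: "Q t \<in> space (prob_algebra S)"
    and fin_t: "chi2 (P t) (Q t) < \<infinity>"
    and K: "\<And>j. t \<le> j \<Longrightarrow> j < u \<Longrightarrow> K j \<in> S \<rightarrow>\<^sub>M prob_algebra S"
    and P_Suc: "\<And>j. t \<le> j \<Longrightarrow> j < u \<Longrightarrow> P (Suc j) = P j \<bind> K j"
    and Q_Suc: "\<And>j. t \<le> j \<Longrightarrow> j < u \<Longrightarrow> Q (Suc j) = Q j \<bind> K j"
    and eta: "\<And>j. t \<le> j \<Longrightarrow> j < u \<Longrightarrow> eta_chi2 S (K j) \<le> ennreal (\<eta> j)"
    and eta_nonneg: "\<And>j. t \<le> j \<Longrightarrow> j < u \<Longrightarrow> 0 \<le> \<eta> j"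
  shows "chi2 (P u) (Q u) \<le> ennreal (\<Prod>j\<in>{t..<u}. \<eta> j) * chi2 (P t) (Q t)"
proof -
  have "P k \<in> space (prob_algebra S) \<and> Q k \<in> space (prob_algebra S)
      \<and> chi2 (P k) (Q k) \<le> ennreal (\<Prod>j\<in>{t..<k}. \<eta> j) * chi2 (P t) (Q t)"
    if "t \<le> k" "k \<le> u" for k
    using that
  proof (induction k rule: dec_induct)
    case base
    then show ?case using P_t Q_t by simp
  next
    case (step j)
    then have j: "t \<le> j" "j < u" and P_j: "P j \<in> space (prob_algebra S)"
      and Q_j: "Q j \<in> space (prob_algebra S)"
      and le_j: "chi2 (P j) (Q j) \<le> ennreal (\<Prod>i\<in>{t..<j}. \<eta> i) * chi2 (P t) (Q t)"
      by auto
    have in_prob_algebra: "R \<bind> K j \<in> space (prob_algebra S)" if "R \<in> space (prob_algebra S)" for R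
      using prob_space_bind'[OF that K[OF j]] sets_bind'[OF that K[OF j]]
      by (simp add: space_prob_algebra)
    have fin_j: "chi2 (P j) (Q j) < \<infinity>"
      using le_j fin_t by (simp add: ennreal_mult_less_top le_less_trans)
    have "chi2 (P (Suc j)) (Q (Suc j)) \<le> eta_chi2 S (K j) * chi2 (P j) (Q j)"
      unfolding P_Suc[OF j] Q_Suc[OF j] using P_j Q_j K[OF j] fin_j by (rule chi2_bind_le)
    also have "\<dots> \<le> ennreal (\<eta> j) * (ennreal (\<Prod>i\<in>{t..<j}. \<eta> i) * chi2 (P t) (Q t))"
      using eta[OF j] le_j by (rule mult_mono) auto
    also have "\<dots> = ennreal (\<Prod>i\<in>{t..<Suc j}. \<eta> i) * chi2 (P t) (Q t)"
      using j eta_nonneg[OF j] prod_nonneg[of "{t..<j}" \<eta>] eta_nonneg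
      by (simp add: ennreal_mult prod.atLeastLessThan_Suc mult_ac)
    finally show ?case
      unfolding P_Suc[OF j] Q_Suc[OF j]
      using in_prob_algebra P_j Q_j by simp
  qed
  then show ?thesis using \<open>t \<le> u\<close> by blast
qed

lemma chi2_distr_markov_chain_le:
  fixes M0 M1 :: "'o measure" and Z :: "nat \<Rightarrow> 'o \<Rightarrow> 'z"
  assumes M0: "prob_space M0" and M1: "prob_space M1" and "t \<le> u"
    and Z_0: "\<And>i. i \<le> u \<Longrightarrow> Z i \<in> M0 \<rightarrow>\<^sub>M S" and Z_1: "\<And>i. i \<le> u \<Longrightarrow> Z i \<in> M1 \<rightarrow>\<^sub>M S"
    and K: "\<And>j. t \<le> j \<Longrightarrow> j < u \<Longrightarrow> K j \<in> S \<rightarrow>\<^sub>M prob_algebra S"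
    and step_0: "\<And>j. t \<le> j \<Longrightarrow> j < u \<Longrightarrow> markov_step M0 S Z t j (K j)"
    and step_1: "\<And>j. t \<le> j \<Longrightarrow> j < u \<Longrightarrow> markov_step M1 S Z t j (K j)"
    and eta: "\<And>j. t \<le> j \<Longrightarrow> j < u \<Longrightarrow> eta_chi2 S (K j) \<le> ennreal (\<eta> j)"
    and eta_nonneg: "\<And>j. t \<le> j \<Longrightarrow> j < u \<Longrightarrow> 0 \<le> \<eta> j"
    and fin: "chi2 (distr M0 S (Z t)) (distr M1 S (Z t)) < \<infinity>"
  shows "chi2 (distr M0 S (Z u)) (distr M1 S (Z u))
    \<le> ennreal (\<Prod>j\<in>{t..<u}. \<eta> j) * chi2 (distr M0 S (Z t)) (distr M1 S (Z t))"
proof (rule chi2_iterated_bind_le[where P="\<lambda>j. distr M0 S (Z j)" and Q="\<lambda>j. distr M1 S (Z j)",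
      OF \<open>t \<le> u\<close> _ _ fin K _ _ eta eta_nonneg])
  show "distr M0 S (Z t) \<in> space (prob_algebra S)" "distr M1 S (Z t) \<in> space (prob_algebra S)"
    using Z_0 Z_1 \<open>t \<le> u\<close> M0 M1
    by (auto simp: space_prob_algebra intro!: prob_space.prob_space_distr)
  fix j assume "t \<le> j" "j < u"
  then show "distr M0 S (Z (Suc j)) = distr M0 S (Z j) \<bind> K j"
    and "distr M1 S (Z (Suc j)) = distr M1 S (Z j) \<bind> K j"
    using Z_0 Z_1 K step_0 step_1
    by (auto intro!: distr_Suc_eq_bind_of_markov_step M0 M1)
qed

lemma indicator_PiE_eq_prod:
  assumes "finite I" "x \<in> extensional I"
  shows "indicator (PiE I A) x = (\<Prod>i\<in>I. indicator (A i) (x i) :: ennreal)"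
  using assms by (auto simp: indicator_def PiE_def extensional_def Pi_def)

lemma PiM_density:
  fixes I :: "'i set"
  assumes Q: "sigma_finite_measure Q" and dens: "sigma_finite_measure (density Q f)"
    and f[measurable]: "f \<in> borel_measurable Q" and I: "finite I"
  shows "PiM I (\<lambda>_. density Q f) = density (PiM I (\<lambda>_. Q)) (\<lambda>x. \<Prod>i\<in>I. f (x i))"
proof -
  interpret Q: product_sigma_finite "\<lambda>_::'i. Q"
    by (simp add: product_sigma_finite_def Q)
  interpret P: product_sigma_finite "\<lambda>_::'i. density Q f"
    by (simp add: product_sigma_finite_def dens)
  show ?thesis
  proof (rule P.PiM_eqI[OF I, symmetric])
    show "sets (density (PiM I (\<lambda>_. Q)) (\<lambda>x. \<Prod>i\<in>I. f (x i))) = sets (PiM I (\<lambda>_. density Q f))"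
      by (simp cong: sets_PiM_cong)
    fix A assume "\<And>i. i \<in> I \<Longrightarrow> A i \<in> sets (density Q f)"
    then have A[measurable]: "\<And>i. i \<in> I \<Longrightarrow> A i \<in> sets Q" by simp
    have "emeasure (density (PiM I (\<lambda>_. Q)) (\<lambda>x. \<Prod>i\<in>I. f (x i))) (PiE I A)
        = (\<integral>\<^sup>+x. (\<Prod>i\<in>I. f (x i)) * indicator (PiE I A) x \<partial>PiM I (\<lambda>_. Q))"
      using A I by (simp add: emeasure_density sets_PiM_I_finite)
    also have "\<dots> = (\<integral>\<^sup>+x. (\<Prod>i\<in>I. f (x i) * indicator (A i) (x i)) \<partial>PiM I (\<lambda>_. Q))"
      using I by (intro nn_integral_cong)
        (simp add: indicator_PiE_eq_prod prod.distrib space_PiM PiE_iff)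
    also have "\<dots> = (\<Prod>i\<in>I. \<integral>\<^sup>+y. f y * indicator (A i) y \<partial>Q)"
      using I A by (intro Q.product_nn_integral_prod) auto
    also have "\<dots> = (\<Prod>i\<in>I. emeasure (density Q f) (A i))"
      using A by (intro prod.cong) (simp_all add: emeasure_density)
    finally show "emeasure (density (PiM I (\<lambda>_. Q)) (\<lambda>x. \<Prod>i\<in>I. f (x i))) (PiE I A)
        = (\<Prod>i\<in>I. emeasure (density Q f) (A i))" .
  qed
qed

lemma integral_probability_density:
  assumes r[measurable]: "r \<in> borel_measurable Q" and r_nonneg: "\<And>x. 0 \<le> r x"
    and P: "prob_space (density Q (\<lambda>x. ennreal (r x)))"
  shows "integrable Q r" "(\<integral>x. r x \<partial>Q) = 1"
proof -
  have "(\<integral>\<^sup>+x. ennreal (r x) \<partial>Q) = ennreal 1"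
    using prob_space.emeasure_space_1[OF P] by (simp add: emeasure_density)
  then show "integrable Q r" "(\<integral>x. r x \<partial>Q) = 1"
    using r_nonneg by (auto intro: integrableI_nn_integral_finite simp: integral_eq_nn_integral)
qed

lemma chi2_density_second_moment:
  assumes Q: "prob_space Q" and r[measurable]: "r \<in> borel_measurable Q"
    and r_nonneg: "\<And>x. 0 \<le> r x" and P: "prob_space (density Q (\<lambda>x. ennreal (r x)))"
    and int_r2: "integrable Q (\<lambda>x. (r x)\<^sup>2)"
  shows "chi2 (density Q (\<lambda>x. ennreal (r x))) Q = ennreal ((\<integral>x. (r x)\<^sup>2 \<partial>Q) - 1)"
proof -
  interpret Q: prob_space Q by fact
  have int_r: "integrable Q r" "(\<integral>x. r x \<partial>Q) = 1"
    using integral_probability_density[OF r r_nonneg P] by auto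
  have sq: "(r x - 1)\<^sup>2 = (r x)\<^sup>2 - 2 * r x + 1" for x
    by (simp add: power2_eq_square algebra_simps)
  have "integrable Q (\<lambda>x. (r x - 1)\<^sup>2)" "(\<integral>x. (r x - 1)\<^sup>2 \<partial>Q) = (\<integral>x. (r x)\<^sup>2 \<partial>Q) - 1"
    unfolding sq using int_r int_r2 by (auto simp: Q.prob_space)
  then show ?thesis
    using chi2_density[OF Q.sigma_finite_measure_axioms r r_nonneg]
    by (subst (asm) nn_integral_eq_integral) auto
qed

lemma chi2_PiM:
  fixes I :: "'i set"
  assumes P: "prob_space P" and Q: "prob_space Q"
    and sets_eq: "sets P = sets Q" and chi2_eq: "chi2 P Q = ennreal c" and "0 \<le> c"
    and I: "finite I"
  shows "chi2 (PiM I (\<lambda>_. P)) (PiM I (\<lambda>_. Q)) = ennreal ((1 + c) ^ card I - 1)"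
proof -
  interpret Q: prob_space Q by fact
  have P': "sigma_finite_measure P" and Q': "sigma_finite_measure Q"
    using P Q by (simp_all add: prob_space_imp_sigma_finite)
  have ac: "absolutely_continuous Q P"
    using chi2_eq by (simp add: absolutely_continuous_if_chi2_finite)
  obtain r where r[measurable]: "r \<in> borel_measurable Q" and r_nonneg: "\<And>x. 0 \<le> r x"
    and P_eq: "P = density Q (\<lambda>x. ennreal (r x))"
    using real_density_of_absolutely_continuous[OF Q' P' ac sets_eq] by blast
  have int_r: "integrable Q r" "(\<integral>x. r x \<partial>Q) = 1"
    using integral_probability_density[OF r r_nonneg] P P_eq by auto
  have int_sq: "integrable Q (\<lambda>x. (r x - 1)\<^sup>2)" "(\<integral>x. (r x - 1)\<^sup>2 \<partial>Q) = c"
    using chi2_density_eq_ennrealD[OF Q' r r_nonneg] chi2_eq P_eq \<open>0 \<le> c\<close> by auto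
  have r_sq: "(r x)\<^sup>2 = (r x - 1)\<^sup>2 + 2 * r x - 1" for x
    by (simp add: power2_eq_square algebra_simps)
  have int_r2: "integrable Q (\<lambda>x. (r x)\<^sup>2)" "(\<integral>x. (r x)\<^sup>2 \<partial>Q) = 1 + c"
    unfolding r_sq using int_r int_sq by (auto simp: Q.prob_space)
  interpret Q_I: product_prob_space "\<lambda>_::'i. Q" I ..
  define F where "F x = (\<Prod>i\<in>I. r (x i))" for x
  have "PiM I (\<lambda>_. P) = density (PiM I (\<lambda>_. Q)) (\<lambda>x. \<Prod>i\<in>I. ennreal (r (x i)))"
    unfolding P_eq using P P_eq I by (intro PiM_density Q' prob_space_imp_sigma_finite) auto
  also have "\<dots> = density (PiM I (\<lambda>_. Q)) (\<lambda>x. ennreal (F x))"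
    unfolding F_def using r_nonneg by (simp add: prod_ennreal)
  finally have P_pow: "PiM I (\<lambda>_. P) = density (PiM I (\<lambda>_. Q)) (\<lambda>x. ennreal (F x))" .
  have F_sq: "(F x)\<^sup>2 = (\<Prod>i\<in>I. (r (x i))\<^sup>2)" for x
    unfolding F_def by (simp add: prod_power_distrib)
  have int_F2: "integrable (PiM I (\<lambda>_. Q)) (\<lambda>x. (F x)\<^sup>2)"
      "(\<integral>x. (F x)\<^sup>2 \<partial>PiM I (\<lambda>_. Q)) = (1 + c) ^ card I"
    unfolding F_sq using Q_I.product_integrable_prod[of I "\<lambda>_ y. (r y)\<^sup>2"]
      Q_I.product_integral_prod[of I "\<lambda>_ y. (r y)\<^sup>2"] I int_r2
    by simp_all
  have F[measurable]: "F \<in> borel_measurable (PiM I (\<lambda>_. Q))"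
    unfolding F_def by measurable
  have F_nonneg: "0 \<le> F x" for x
    unfolding F_def using r_nonneg by (simp add: prod_nonneg)
  have "prob_space (PiM I (\<lambda>_. P))"
    by (rule prob_space_PiM) (rule P)
  then have "prob_space (density (PiM I (\<lambda>_. Q)) (\<lambda>x. ennreal (F x)))"
    unfolding P_pow .
  then show ?thesis
    using chi2_density_second_moment[OF prob_space_PiM[OF Q] F F_nonneg _ int_F2(1)] int_F2(2)
    unfolding P_pow by simp
qed

lemma le_half_sqrt_if_AM_GM_bounds:
  fixes d c :: real
  assumes "0 \<le> c" and bound: "\<And>l. 0 < l \<Longrightarrow> d \<le> l / 8 + c / (2 * l)"
  shows "d \<le> sqrt c / 2"
proof (cases "c = 0")
  case True
  show ?thesis
  proof (rule ccontr)
    assume "\<not> d \<le> sqrt c / 2"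
    then have "0 < d" using True by simp
    then show False using bound[of "4 * d"] True by simp
  qed
next
  case False
  then have "0 < sqrt c" using \<open>0 \<le> c\<close> by simp
  moreover have "c / (4 * sqrt c) = sqrt c / 4"
    using \<open>0 < sqrt c\<close> \<open>0 \<le> c\<close> by (simp add: field_simps flip: real_sqrt_mult)
  ultimately show ?thesis
    using bound[of "2 * sqrt c"] by simp
qed

(* Centring the indicator is free because the integral of 1 - r vanishes; it is what makes
   AM-GM below produce the factor a (1 - a) <= 1/4. *)
lemma measure_diff_density_eq_integral:
  assumes Q: "prob_space Q" and r[measurable]: "r \<in> borel_measurable Q"
    and r_nonneg: "\<And>x. 0 \<le> r x" and P: "prob_space (density Q (\<lambda>x. ennreal (r x)))"
    and A[measurable]: "A \<in> sets Q"
  shows "integrable Q (\<lambda>x. (indicator A x - measure Q A) * (1 - r x))"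
    and "measure Q A - measure (density Q (\<lambda>x. ennreal (r x))) A
      = (\<integral>x. (indicator A x - measure Q A) * (1 - r x) \<partial>Q)"
proof -
  interpret Q: prob_space Q by fact
  interpret P: prob_space "density Q (\<lambda>x. ennreal (r x))" by fact
  have int_r: "integrable Q r" "(\<integral>x. r x \<partial>Q) = 1"
    using integral_probability_density[OF r r_nonneg P] by auto
  have int_rA: "integrable Q (\<lambda>x. r x * indicator A x)"
    using A int_r(1) by (rule integrable_real_mult_indicator)
  have int_A: "integrable Q (indicator A :: _ \<Rightarrow> real)"
    by (intro integrable_real_indicator A) (simp add: Q.emeasure_finite less_top[symmetric])
  have "measure (density Q (\<lambda>x. ennreal (r x))) A
      = (\<integral>x. indicator A x \<partial>density Q (\<lambda>x. ennreal (r x)))"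
    using A P.emeasure_finite by simp
  also have "\<dots> = (\<integral>x. r x * indicator A x \<partial>Q)"
    using r_nonneg by (subst integral_density) auto
  finally have P_A: "measure (density Q (\<lambda>x. ennreal (r x))) A = (\<integral>x. r x * indicator A x \<partial>Q)" .
  have expand: "(indicator A x - measure Q A) * (1 - r x)
      = indicator A x - r x * indicator A x - measure Q A + measure Q A * r x" for x :: 'a
    by (simp add: algebra_simps)
  show "integrable Q (\<lambda>x. (indicator A x - measure Q A) * (1 - r x))"
    unfolding expand using int_A int_rA int_r by simp
  show "measure Q A - measure (density Q (\<lambda>x. ennreal (r x))) A
      = (\<integral>x. (indicator A x - measure Q A) * (1 - r x) \<partial>Q)"
    unfolding expand P_A using int_A int_rA int_r by (simp add: Q.prob_space)
qed

lemma measure_diff_density_le_sqrt: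
  assumes Q: "prob_space Q" and r[measurable]: "r \<in> borel_measurable Q"
    and r_nonneg: "\<And>x. 0 \<le> r x" and P: "prob_space (density Q (\<lambda>x. ennreal (r x)))"
    and int_sq: "integrable Q (\<lambda>x. (r x - 1)\<^sup>2)" and A[measurable]: "A \<in> sets Q"
  shows "measure Q A - measure (density Q (\<lambda>x. ennreal (r x))) A
    \<le> sqrt (\<integral>x. (r x - 1)\<^sup>2 \<partial>Q) / 2"
proof (rule le_half_sqrt_if_AM_GM_bounds)
  interpret Q: prob_space Q by fact
  define a where "a = measure Q A"
  define c where "c = (\<integral>x. (r x - 1)\<^sup>2 \<partial>Q)"
  note diff = measure_diff_density_eq_integral[OF Q r r_nonneg P A, folded a_def]
  have square: "(indicator A x - a)\<^sup>2 = (1 - 2 * a) * indicator A x + a\<^sup>2" for x :: 'a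
    by (cases "x \<in> A") (simp_all add: power2_eq_square algebra_simps)
  have int_square: "integrable Q (\<lambda>x. (indicator A x - a)\<^sup>2)"
      "(\<integral>x. (indicator A x - a)\<^sup>2 \<partial>Q) = a - a\<^sup>2"
    unfolding square using A Q.emeasure_finite
    by (simp_all add: a_def Q.prob_space power2_eq_square algebra_simps less_top[symmetric])
  fix l :: real assume "0 < l"
  have AM_GM: "(indicator A x - a) * (1 - r x) \<le> l / 2 * (indicator A x - a)\<^sup>2 + (r x - 1)\<^sup>2 / (2 * l)"
    for x
  proof -
    have "0 \<le> (l * (indicator A x - a) - (1 - r x))\<^sup>2 / (2 * l)"
      using \<open>0 < l\<close> by simp
    then show ?thesis
      using \<open>0 < l\<close> by (simp add: field_simps power2_eq_square)
  qed
  have "a - measure (density Q (\<lambda>x. ennreal (r x))) A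
      \<le> (\<integral>x. l / 2 * (indicator A x - a)\<^sup>2 + (r x - 1)\<^sup>2 / (2 * l) \<partial>Q)"
    unfolding diff(2) using AM_GM diff(1) int_square int_sq by (intro integral_mono) auto
  also have "\<dots> = l / 2 * (a - a\<^sup>2) + c / (2 * l)"
    using int_square int_sq by (simp add: c_def)
  also have "\<dots> \<le> l / 8 + c / (2 * l)"
  proof -
    have "0 \<le> l / 2 * (a - 1 / 2)\<^sup>2" using \<open>0 < l\<close> by simp
    then show ?thesis by (simp add: power2_eq_square algebra_simps)
  qed
  finally show "measure Q A - measure (density Q (\<lambda>x. ennreal (r x))) A \<le> l / 8 + c / (2 * l)"
    by (simp add: a_def)
qed (simp add: integral_nonneg)

lemma measure_diff_le_sqrt_chi2:
  assumes P: "prob_space P" and Q: "prob_space Q"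
    and sets_eq: "sets P = sets Q" and chi2_eq: "chi2 P Q = ennreal c" and "0 \<le> c"
    and A: "A \<in> sets Q"
  shows "measure Q A - measure P A \<le> sqrt c / 2"
proof -
  have P': "sigma_finite_measure P" and Q': "sigma_finite_measure Q"
    using P Q by (simp_all add: prob_space_imp_sigma_finite)
  have ac: "absolutely_continuous Q P"
    using chi2_eq by (simp add: absolutely_continuous_if_chi2_finite)
  obtain r where r: "r \<in> borel_measurable Q" and r_nonneg: "\<And>x. 0 \<le> r x"
    and P_eq: "P = density Q (\<lambda>x. ennreal (r x))"
    using real_density_of_absolutely_continuous[OF Q' P' ac sets_eq] by blast
  have "integrable Q (\<lambda>x. (r x - 1)\<^sup>2)" "(\<integral>x. (r x - 1)\<^sup>2 \<partial>Q) = c"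
    using chi2_density_eq_ennrealD[OF Q' r r_nonneg] chi2_eq P_eq \<open>0 \<le> c\<close> by auto
  then show ?thesis
    using measure_diff_density_le_sqrt[OF Q r r_nonneg _ _ A] P P_eq by simp
qed

lemma PiM_distr:
  fixes I :: "'i set"
  assumes R: "prob_space R" and g: "g \<in> R \<rightarrow>\<^sub>M T" and I: "finite I"
  shows "PiM I (\<lambda>_. distr R T g) = distr (PiM I (\<lambda>_. R)) (PiM I (\<lambda>_. T)) (compose I g)"
proof -
  have g': "g \<in> R \<rightarrow>\<^sub>M distr R T g"
    using g by (subst measurable_cong_sets[OF refl sets_distr])
  have "distr R (distr R T g) g = distr R T g"
    by (rule distr_cong) auto
  moreover have "distr (PiM I (\<lambda>_. R)) (PiM I (\<lambda>_. distr R T g)) (compose I g)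
      = PiM I (\<lambda>_. distr R (distr R T g) g)"
    using R g g' I by (intro distr_PiM_finite_prob_space' prob_space.prob_space_distr) auto
  moreover have "distr (PiM I (\<lambda>_. R)) (PiM I (\<lambda>_. distr R T g)) (compose I g)
      = distr (PiM I (\<lambda>_. R)) (PiM I (\<lambda>_. T)) (compose I g)"
    by (rule distr_cong) (auto intro!: sets_PiM_cong)
  ultimately show ?thesis by simp
qed

lemma measure_PiM_distr_Collect:
  fixes I :: "'i set"
  assumes R: "prob_space R" and g: "g \<in> R \<rightarrow>\<^sub>M T" and I: "finite I"
    and \<phi>: "Measurable.pred (PiM I (\<lambda>_. T)) \<phi>"
  shows "measure (PiM I (\<lambda>_. distr R T g)) {x \<in> space (PiM I (\<lambda>_. distr R T g)). \<phi> x}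
    = measure (PiM I (\<lambda>_. R)) {x \<in> space (PiM I (\<lambda>_. R)). \<phi> (compose I g x)}"
proof -
  have g_pow: "compose I g \<in> PiM I (\<lambda>_. R) \<rightarrow>\<^sub>M PiM I (\<lambda>_. T)"
    unfolding compose_def using g by measurable
  have "compose I g -` {x \<in> space (PiM I (\<lambda>_. T)). \<phi> x} \<inter> space (PiM I (\<lambda>_. R))
      = {x \<in> space (PiM I (\<lambda>_. R)). \<phi> (compose I g x)}"
    using measurable_space[OF g_pow] by auto
  then show ?thesis
    unfolding PiM_distr[OF R g I] space_distr using \<phi>
    by (subst measure_distr[OF g_pow]) auto
qed

lemma total_test_error_distr:
  assumes P: "prob_space P" and Q: "prob_space Q"
    and sets_P: "sets P = sets S" and sets_Q: "sets Q = sets S"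
    and g: "g \<in> S \<rightarrow>\<^sub>M T" and \<psi>: "Measurable.pred (PiM {..<n} (\<lambda>_. T)) \<psi>"
  shows "total_test_error n (distr P T g) (distr Q T g) \<psi>
    = total_test_error n P Q (\<lambda>x. \<psi> (compose {..<n} g x))"
proof -
  have "g \<in> P \<rightarrow>\<^sub>M T" "g \<in> Q \<rightarrow>\<^sub>M T"
    using g sets_P sets_Q by (simp_all cong: measurable_cong_sets)
  then show ?thesis
    unfolding total_test_error_def using \<psi>
    by (simp add: measure_PiM_distr_Collect[OF P] measure_PiM_distr_Collect[OF Q])
qed

lemma total_test_error_ge:
  assumes P: "prob_space P" and Q: "prob_space Q" and sets_eq: "sets P = sets Q"
    and chi2_eq: "chi2 P Q = ennreal c" and "0 \<le> c"
    and \<phi>: "Measurable.pred (PiM {..<n} (\<lambda>_. Q)) \<phi>"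
  shows "1 - sqrt ((1 + c) ^ n - 1) / 2 \<le> total_test_error n P Q \<phi>"
proof -
  let ?P = "PiM {..<n} (\<lambda>_. P)" and ?Q = "PiM {..<n} (\<lambda>_. Q)"
  interpret Q_pow: prob_space ?Q by (rule prob_space_PiM) (rule Q)
  have sets_pow: "sets ?P = sets ?Q"
    using sets_eq by (intro sets_PiM_cong) auto
  define A where "A = {x \<in> space ?Q. \<phi> x}"
  have A: "A \<in> sets ?Q"
    unfolding A_def using \<phi> by measurable
  have "total_test_error n P Q \<phi> = measure ?P A + measure ?Q (space ?Q - A)"
  proof -
    have "{x \<in> space ?Q. \<not> \<phi> x} = space ?Q - A"
      by (auto simp: A_def)
    then show ?thesis
      unfolding total_test_error_def sets_eq_imp_space_eq[OF sets_pow] by (simp add: A_def)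
  qed
  also have "\<dots> = 1 - (measure ?Q A - measure ?P A)"
    using A by (simp add: Q_pow.prob_compl)
  finally show ?thesis
    using measure_diff_le_sqrt_chi2[OF prob_space_PiM[OF P] prob_space_PiM[OF Q] sets_pow
        chi2_PiM[OF P Q sets_eq chi2_eq \<open>0 \<le> c\<close>] _ A] \<open>0 \<le> c\<close>
    by simp
qed

lemma one_plus_power_le_linear:
  fixes c :: real
  assumes "0 \<le> c" and "n * c \<le> 1"
  shows "(1 + c) ^ n \<le> 1 + 3 * (n * c)"
proof -
  have "(1 + c) ^ n \<le> exp c ^ n"
    using \<open>0 \<le> c\<close> by (intro power_mono) (auto simp: exp_ge_add_one_self add.commute)
  also have "\<dots> = exp (n * c / 2) ^ 2"
    by (simp add: exp_of_nat_mult flip: exp_double)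
  also have "\<dots> \<le> (1 + n * c) ^ 2"
  proof (rule power_mono)
    have "norm (exp (n * c / 2)) \<le> 1 + 2 * norm (n * c / 2)"
      by (rule exp_bound_lemma) (use assms in simp)
    then show "exp (n * c / 2) \<le> 1 + n * c" using \<open>0 \<le> c\<close> by simp
  qed simp
  also have "\<dots> \<le> 1 + 3 * (n * c)"
    using assms mult_left_le[of "n * c" "n * c"] by (simp add: power2_eq_square algebra_simps)
  finally show ?thesis .
qed

lemma test_sample_complexity:
  fixes g :: "'a \<Rightarrow> 'b" and \<psi> :: "(nat \<Rightarrow> 'b) \<Rightarrow> bool"
  assumes P: "prob_space P" and Q: "prob_space Q"
    and sets_P: "sets P = sets S" and sets_Q: "sets Q = sets S"
    and chi2_le: "chi2 P Q \<le> ennreal B" and "0 \<le> B"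
    and g: "g \<in> S \<rightarrow>\<^sub>M T" and \<psi>: "Measurable.pred (PiM {..<n} (\<lambda>_. T)) \<psi>"
    and error: "total_test_error n (distr P T g) (distr Q T g) \<psi> \<le> \<epsilon>"
    and "0 \<le> \<epsilon>" "\<epsilon> < 1"
  shows "(1 - \<epsilon>)\<^sup>2 \<le> n * B"
proof -
  define c where "c = enn2real (chi2 P Q)"
  have chi2_eq: "chi2 P Q = ennreal c" and "0 \<le> c" and "c \<le> B"
    using chi2_le \<open>0 \<le> B\<close> by (auto simp: c_def ennreal_enn2real_if enn2real_leI top_unique)
  have "Measurable.pred (PiM {..<n} (\<lambda>_. Q)) (\<lambda>x. \<psi> (compose {..<n} g x))"
    unfolding compose_def using g sets_Q \<psi> by (simp cong: measurable_cong_sets) measurable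
  then have error_ge: "1 - sqrt ((1 + c) ^ n - 1) / 2 \<le> total_test_error n (distr P T g) (distr Q T g) \<psi>"
    unfolding total_test_error_distr[OF P Q sets_P sets_Q g \<psi>] using sets_P sets_Q
    by (intro total_test_error_ge[OF P Q _ chi2_eq \<open>0 \<le> c\<close>]) auto
  have "(1 - \<epsilon>)\<^sup>2 \<le> n * c"
  proof (rule ccontr)
    assume "\<not> (1 - \<epsilon>)\<^sup>2 \<le> n * c"
    then have small: "n * c < (1 - \<epsilon>)\<^sup>2" by simp
    have "(1 - \<epsilon>)\<^sup>2 \<le> 1"
      using \<open>0 \<le> \<epsilon>\<close> \<open>\<epsilon> < 1\<close> by (simp add: power_le_one)
    then have "(1 + c) ^ n - 1 \<le> 3 * (n * c)"
      using small \<open>0 \<le> c\<close> one_plus_power_le_linear[of c n] by simp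
    also have "\<dots> < 4 * (1 - \<epsilon>)\<^sup>2"
      using small \<open>0 \<le> c\<close> zero_le_mult_iff[of "real n" c] by linarith
    also have "\<dots> = (2 * (1 - \<epsilon>))\<^sup>2"
      by (simp only: power_mult_distrib) simp
    also have "\<dots> \<le> (sqrt ((1 + c) ^ n - 1))\<^sup>2"
      using error_ge error \<open>\<epsilon> < 1\<close>
      by (intro power_mono) auto
    also have "\<dots> = (1 + c) ^ n - 1"
      using \<open>0 \<le> c\<close> by simp
    finally show False by simp
  qed
  also have "\<dots> \<le> n * B"
    using \<open>c \<le> B\<close> by (simp add: mult_left_mono)
  finally show ?thesis .
qed

theorem corollary5:
  fixes M0 M1 :: "'o measure" and S :: "'z measure" and T :: "'y measure"
    and Z :: "nat \<Rightarrow> 'o \<Rightarrow> 'z" and t u H :: nat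
    and K :: "nat \<Rightarrow> 'z \<Rightarrow> 'z measure" and \<eta> :: "nat \<Rightarrow> real"
    and g :: "'z \<Rightarrow> 'y" and D2 \<epsilon> :: real and n :: nat
    and \<psi> :: "(nat \<Rightarrow> 'y) \<Rightarrow> bool"
  assumes "prob_space M0" and "prob_space M1"
    and "t < u" and "u \<le> H"
    and "\<And>i. i \<le> H \<Longrightarrow> Z i \<in> M0 \<rightarrow>\<^sub>M S"
    and "\<And>i. i \<le> H \<Longrightarrow> Z i \<in> M1 \<rightarrow>\<^sub>M S"
    and "absolutely_continuous (distr M1 S (Z t)) (distr M0 S (Z t))"
    and "chi2 (distr M0 S (Z t)) (distr M1 S (Z t)) = ennreal D2" and "0 < D2"
    and "\<And>j. t \<le> j \<Longrightarrow> j < u \<Longrightarrow> K j \<in> S \<rightarrow>\<^sub>M prob_algebra S"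
    and "\<And>j. t \<le> j \<Longrightarrow> j < u \<Longrightarrow> markov_step M0 S Z t j (K j)"
    and "\<And>j. t \<le> j \<Longrightarrow> j < u \<Longrightarrow> markov_step M1 S Z t j (K j)"
    and "\<And>j. t \<le> j \<Longrightarrow> j < u \<Longrightarrow> 0 < \<eta> j \<and> \<eta> j \<le> 1"
    and "\<And>j. t \<le> j \<Longrightarrow> j < u \<Longrightarrow> eta_chi2 S (K j) \<le> ennreal (\<eta> j)"
    and "g \<in> S \<rightarrow>\<^sub>M T"
    and "0 < \<epsilon>" and "\<epsilon> < 1/2"
    and "\<psi> \<in> PiM {..<n} (\<lambda>_. T) \<rightarrow>\<^sub>M count_space UNIV"
    and "total_test_error n (distr M0 T (\<lambda>\<omega>. g (Z u \<omega>))) (distr M1 T (\<lambda>\<omega>. g (Z u \<omega>))) \<psi> \<le> \<epsilon>"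
  shows "real n \<ge> (1 - \<epsilon>)\<^sup>2 / ((\<Prod>j\<in>{t..<u}. \<eta> j) * D2)
         \<and> (\<forall>\<eta>0. (\<forall>j\<in>{t..<u}. \<eta> j = \<eta>0) \<longrightarrow> real n \<ge> (1 - \<epsilon>)\<^sup>2 / (\<eta>0 ^ (u - t) * D2))"
proof -
  define B where "B = (\<Prod>j\<in>{t..<u}. \<eta> j) * D2"
  have "0 < B"
    unfolding B_def using assms(9,13) by (intro mult_pos_pos prod_pos) auto
  have "chi2 (distr M0 S (Z u)) (distr M1 S (Z u))
      \<le> ennreal (\<Prod>j\<in>{t..<u}. \<eta> j) * chi2 (distr M0 S (Z t)) (distr M1 S (Z t))"
    using assms(1-6,8,10-14) by (intro chi2_distr_markov_chain_le) (auto simp: less_imp_le)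
  also have "\<dots> = ennreal B"
    unfolding B_def assms(8) using assms(9,13) prod_nonneg[of "{t..<u}" \<eta>]
    by (simp add: ennreal_mult less_imp_le)
  finally have chi2_u: "chi2 (distr M0 S (Z u)) (distr M1 S (Z u)) \<le> ennreal B" .
  have Y: "distr M0 T (\<lambda>\<omega>. g (Z u \<omega>)) = distr (distr M0 S (Z u)) T g"
      "distr M1 T (\<lambda>\<omega>. g (Z u \<omega>)) = distr (distr M1 S (Z u)) T g"
    using assms(4-6,15) by (simp_all add: distr_distr comp_def)
  have "(1 - \<epsilon>)\<^sup>2 \<le> n * B"
    using assms(1,2,4-6,15-19) \<open>0 < B\<close> unfolding Y
    by (intro test_sample_complexity[OF _ _ _ _ chi2_u]) (auto intro: prob_space.prob_space_distr)
  then have bound: "(1 - \<epsilon>)\<^sup>2 / B \<le> n"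
    using \<open>0 < B\<close> by (simp add: divide_le_eq)
  show ?thesis
  proof (intro conjI allI impI)
    show "(1 - \<epsilon>)\<^sup>2 / ((\<Prod>j\<in>{t..<u}. \<eta> j) * D2) \<le> n"
      using bound by (simp add: B_def)
    fix \<eta>0 assume "\<forall>j\<in>{t..<u}. \<eta> j = \<eta>0"
    then have "B = \<eta>0 ^ (u - t) * D2"
      by (simp add: B_def)
    then show "(1 - \<epsilon>)\<^sup>2 / (\<eta>0 ^ (u - t) * D2) \<le> n"
      using bound by simp
  qed
qed

end
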